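(* Fix $\vartheta_1\in(0,\pi/2)$, $\varphi_1\in(0,\pi]$ and an integer $k\ge1$. Suppose $\eta_-<\eta_+$ are two points of $I_k$ with $\Phi(\eta_-)=\Phi(\eta_+)=\varphi_1$. Then $$\sin^2\vartheta_1\frac{\eta_-^2}{\sin^2\eta_-}<\sin^2\vartheta_1\frac{\eta_+^2}{\sin^2\eta_+}.$$
   Context: For integers $k\ge0$ let $I_k=[\vartheta_1+k\pi,(k+1)\pi-\vartheta_1]$. For $\eta\in I_k$ set $\gamma(\eta)=\sqrt{1-\sin^2\vartheta_1/\sin^2\eta}$ and $$\Phi(\eta)=-\eta\,\gamma(\eta)+k\pi+\arccos\Big(\frac{\cos(\eta-k\pi)}{\cos\vartheta_1}\Big),\qquad\arccos\in[0,\pi].$$ *)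

theory Defs
  imports "HOL-Analysis.Analysis"
begin

definition Ik :: "real \<Rightarrow> nat \<Rightarrow> real set" where
  "Ik \<theta>1 k = {\<theta>1 + real k * pi .. real (k + 1) * pi - \<theta>1}"

definition gam :: "real \<Rightarrow> real \<Rightarrow> real" where
  "gam \<theta>1 \<eta> = sqrt (1 - (sin \<theta>1)^2 / (sin \<eta>)^2)"

definition Phi :: "real \<Rightarrow> nat \<Rightarrow> real \<Rightarrow> real" where
  "Phi \<theta>1 k \<eta> = - \<eta> * gam \<theta>1 \<eta> + real k * pi
      + arccos (cos (\<eta> - real k * pi) / cos \<theta>1)"

end

theory Submission imports Defs begin

text \<open>Write \<open>f \<eta> = \<eta>\<^sup>2 / sin\<^sup>2 \<eta>\<close> and \<open>K = k\<pi>\<close>, so that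
  \<open>\<Phi>(\<eta>) = K + arccos (cos (\<eta> - K) / cos \<theta>\<^sub>1) - sqrt (\<eta>\<^sup>2 - sin\<^sup>2 \<theta>\<^sub>1 f \<eta>)\<close>.
  Suppose \<open>f \<eta>\<^sub>+ \<le> f \<eta>\<^sub>- = T\<close>. On \<open>I\<^sub>k\<close> the inequality \<open>f \<eta> \<le> M\<close> reads
  \<open>\<eta> \<le> sqrt M sin (\<eta> - K)\<close>, and \<open>\<eta> \<mapsto> sqrt M sin (\<eta> - K) - \<eta>\<close> is strictly concave there,
  so \<open>f\<close> is strictly quasi-convex: \<open>f < T\<close> strictly between \<open>\<eta>\<^sub>-\<close> and \<open>\<eta>\<^sub>+\<close>.
  Freezing \<open>f \<eta>\<close> to \<open>T\<close> in the formula for \<open>\<Phi>\<close> gives a function \<open>K + N \<eta>\<close> which bounds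
  \<open>\<Phi>(\<eta>)\<close> from below wherever \<open>f \<eta> \<le> T\<close> and equals it at \<open>\<eta>\<^sub>-\<close>; and \<open>f < T\<close> makes
  \<open>N' < 0\<close> on \<open>(\<eta>\<^sub>-, \<eta>\<^sub>+)\<close>. Hence \<open>\<Phi>(\<eta>\<^sub>+) \<le> K + N \<eta>\<^sub>+ < K + N \<eta>\<^sub>- = \<Phi>(\<eta>\<^sub>-)\<close>,
  a contradiction.\<close>

lemma sq_div_sq_le_iff:
  fixes x y M :: real
  assumes "0 \<le> x" "0 < y" "0 \<le> M"
  shows "x^2 / y^2 \<le> M \<longleftrightarrow> x \<le> sqrt M * y"
    and "x^2 / y^2 < M \<longleftrightarrow> x < sqrt M * y"
proof -
  have q: "x^2 / y^2 = (x / y)^2" and nonneg: "0 \<le> x / y"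
    using assms by (simp_all add: power_divide)
  have "(x / y)^2 \<le> M \<longleftrightarrow> x / y \<le> sqrt M"
    using nonneg assms(3) real_le_rsqrt power_mono[of "x / y" "sqrt M" 2] by fastforce
  moreover have "(x / y)^2 < M \<longleftrightarrow> x / y < sqrt M"
    using nonneg assms(3) real_less_rsqrt power_strict_mono[of "x / y" "sqrt M" 2] by fastforce
  ultimately show "x^2 / y^2 \<le> M \<longleftrightarrow> x \<le> sqrt M * y" "x^2 / y^2 < M \<longleftrightarrow> x < sqrt M * y"
    using assms(2) q by (simp_all add: divide_le_eq divide_less_eq)
qed

lemma div_sqrt_lt_div_sqrt:
  fixes u y s T :: real
  assumes "0 < s" "0 < u" "0 < y" "s^2 * T < y^2" "y^2 < T * u^2"
  shows "u / sqrt (u^2 - s^2) < y / sqrt (y^2 - s^2 * T)"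
proof -
  have "0 < T * u^2" using assms(3,5) zero_less_power[of y 2] by linarith
  then have "0 < T" using assms(2) by (simp add: zero_less_mult_iff)
  moreover have "T * s^2 < T * u^2" using assms(4,5) by (simp add: mult.commute)
  ultimately have p1: "0 < u^2 - s^2" by simp
  have p2: "0 < y^2 - s^2 * T" using assms by simp
  have "(u * sqrt (y^2 - s^2 * T))^2 = u^2 * (y^2 - s^2 * T)"
    using p2 by (simp add: power_mult_distrib)
  also have "\<dots> < y^2 * (u^2 - s^2)"
  proof -
    have "s^2 * y^2 < s^2 * (T * u^2)" using assms(1,5) by simp
    then show ?thesis by (simp add: algebra_simps)
  qed
  also have "\<dots> = (y * sqrt (u^2 - s^2))^2"
    using p1 by (simp add: power_mult_distrib)
  finally have "u * sqrt (y^2 - s^2 * T) < y * sqrt (u^2 - s^2)"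
    by (rule power_less_imp_less_base) (use assms(3) p1 in simp)
  then show ?thesis using p1 p2 by (simp add: divide_less_eq less_divide_eq field_simps)
qed

lemma pos_between_if_derivative_strictly_decreasing:
  fixes g g' :: "real \<Rightarrow> real"
  assumes "a < x" "x < b" "0 \<le> g a" "0 \<le> g b"
    and deriv: "\<And>y. a \<le> y \<Longrightarrow> y \<le> b \<Longrightarrow> (g has_real_derivative g' y) (at y)"
    and decr: "\<And>y z. a \<le> y \<Longrightarrow> y < z \<Longrightarrow> z \<le> b \<Longrightarrow> g' z < g' y"
  shows "0 < g x"
proof (rule ccontr)
  assume "\<not> 0 < g x"
  obtain z1 where z1: "a < z1" "z1 < x" "g x - g a = (x - a) * g' z1"
    using MVT2[of a x g g'] deriv assms(1,2) by auto
  obtain z2 where z2: "x < z2" "z2 < b" "g b - g x = (b - x) * g' z2"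
    using MVT2[of x b g g'] deriv assms(1,2) by auto
  have "g' z1 \<le> 0" using z1 \<open>\<not> 0 < g x\<close> assms(1,3) by (smt (verit) mult_pos_pos)
  moreover have "0 \<le> g' z2" using z2 \<open>\<not> 0 < g x\<close> assms(2,4) by (smt (verit) mult_pos_neg)
  moreover have "g' z2 < g' z1" using decr z1 z2 by simp
  ultimately show False by simp
qed

lemma sin_cos_bounds_away_from_0_pi:
  fixes \<theta> x :: real
  assumes "0 < \<theta>" "\<theta> < pi / 2" "\<theta> \<le> x" "x \<le> pi - \<theta>"
  shows "sin \<theta> \<le> sin x" "cos x \<le> cos \<theta>" "- cos \<theta> \<le> cos x"
proof -
  have s: "0 < sin \<theta>" using sin_gt_zero[of \<theta>] assms by auto
  show c1: "cos x \<le> cos \<theta>" using cos_monotone_0_pi_le[of \<theta> x] assms by auto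
  have "cos (pi - \<theta>) \<le> cos x" using cos_monotone_0_pi_le[of x "pi - \<theta>"] assms by auto
  then show c2: "- cos \<theta> \<le> cos x" by simp
  have "(cos x)^2 \<le> (cos \<theta>)^2" using c1 c2 cos_gt_zero[of \<theta>] assms
    by (simp add: abs_le_iff power2_le_iff_abs_le)
  then have "(sin \<theta>)^2 \<le> (sin x)^2" by (simp add: sin_squared_eq)
  moreover have "0 < sin x" using sin_gt_zero[of x] assms by auto
  ultimately show "sin \<theta> \<le> sin x" using s by (simp add: power2_le_iff_abs_le)
qed

lemma arccos_cos_shift_div_has_derivative:
  fixes \<theta> K y :: real
  assumes "0 < \<theta>" "\<theta> < pi / 2" "\<theta> < y - K" "y - K < pi - \<theta>"
  shows "((\<lambda>y. arccos (cos (y - K) / cos \<theta>)) has_real_derivative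
           sin (y - K) / sqrt ((sin (y - K))^2 - (sin \<theta>)^2)) (at y)"
proof -
  define x where "x = y - K"
  have c: "0 < cos \<theta>" using cos_gt_zero[of \<theta>] assms by auto
  have "cos x < cos \<theta>" using cos_monotone_0_pi[of \<theta> x] assms by (auto simp: x_def)
  moreover have "- cos \<theta> < cos x" using cos_monotone_0_pi[of x "pi - \<theta>"] assms by (auto simp: x_def)
  ultimately have r: "-1 < cos x / cos \<theta>" "cos x / cos \<theta> < 1" using c
    by (auto simp: divide_less_eq less_divide_eq)
  have "sqrt (1 - (cos x / cos \<theta>)^2) * cos \<theta> = sqrt ((sin x)^2 - (sin \<theta>)^2)"
  proof -
    have "(1 - (cos x / cos \<theta>)^2) * (cos \<theta>)^2 = (sin x)^2 - (sin \<theta>)^2"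
      using c by (simp add: field_simps sin_squared_eq)
    then show ?thesis using c by (metis abs_of_pos real_sqrt_abs real_sqrt_mult)
  qed
  moreover have "((\<lambda>y. arccos (cos (y - K) / cos \<theta>)) has_real_derivative
      inverse (- sqrt (1 - (cos x / cos \<theta>)^2)) * (- sin x / cos \<theta>)) (at y)"
    using r c unfolding x_def by (auto intro!: derivative_eq_intros)
  ultimately show ?thesis by (simp add: field_simps x_def)
qed

lemma mem_Ik_iff:
  "\<eta> \<in> Ik \<theta>1 k \<longleftrightarrow> \<theta>1 \<le> \<eta> - real k * pi \<and> \<eta> - real k * pi \<le> pi - \<theta>1"
  by (auto simp: Ik_def algebra_simps)

lemma sin_squared_diff_nat_mult_pi: "(sin (x - real k * pi))^2 = (sin x)^2"
  by (simp add: sin_diff power_mult_distrib; cases "even k"; simp)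

lemma pos_of_mem_Ik: "0 < \<theta>1 \<Longrightarrow> \<eta> \<in> Ik \<theta>1 k \<Longrightarrow> 0 < \<eta>"
  unfolding mem_Ik_iff by (smt (verit) of_nat_0_le_iff pi_gt_zero mult_nonneg_nonneg)

lemma sin_le_sin_diff_of_mem_Ik:
  assumes "0 < \<theta>1" "\<theta>1 < pi / 2" "\<eta> \<in> Ik \<theta>1 k"
  shows "sin \<theta>1 \<le> sin (\<eta> - real k * pi)"
  using sin_cos_bounds_away_from_0_pi assms by (auto simp: mem_Ik_iff)

lemma sq_div_sin_sq_lt_max_on_Ik:
  fixes \<theta>1 \<eta>1 \<eta> \<eta>2 :: real and k :: nat
  assumes "0 < \<theta>1" "\<theta>1 < pi / 2" "\<eta>1 \<in> Ik \<theta>1 k" "\<eta>2 \<in> Ik \<theta>1 k" "\<eta>1 < \<eta>" "\<eta> < \<eta>2"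
  shows "\<eta>^2 / (sin \<eta>)^2 < max (\<eta>1^2 / (sin \<eta>1)^2) (\<eta>2^2 / (sin \<eta>2)^2)"
proof -
  define K where "K = real k * pi"
  define M where "M = max (\<eta>1^2 / (sin \<eta>1)^2) (\<eta>2^2 / (sin \<eta>2)^2)"
  define g where "g = (\<lambda>y. sqrt M * sin y - (K + y))"
  have sin_pos: "0 < sin (\<eta>' - K)" if "\<eta>' \<in> Ik \<theta>1 k" for \<eta>'
    using sin_le_sin_diff_of_mem_Ik[OF assms(1,2) that] sin_gt_zero[of \<theta>1] assms(1,2)
    by (simp add: K_def)
  have "0 < \<eta>1^2 / (sin (\<eta>1 - K))^2"
    using sin_pos[OF assms(3)] pos_of_mem_Ik[OF assms(1,3)] by simp
  then have "0 < \<eta>1^2 / (sin \<eta>1)^2"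
    by (simp add: K_def sin_squared_diff_nat_mult_pi)
  then have "0 < M" by (simp add: M_def less_max_iff_disj)
  have level: "\<eta>'^2 / (sin \<eta>')^2 \<le> M \<longleftrightarrow> 0 \<le> g (\<eta>' - K)"
              "\<eta>'^2 / (sin \<eta>')^2 < M \<longleftrightarrow> 0 < g (\<eta>' - K)" if "\<eta>' \<in> Ik \<theta>1 k" for \<eta>'
    using sq_div_sq_le_iff[of \<eta>' "sin (\<eta>' - K)" M] sin_pos[OF that] pos_of_mem_Ik[OF assms(1) that]
      \<open>0 < M\<close> by (simp_all add: g_def K_def sin_squared_diff_nat_mult_pi)
  have deriv: "(g has_real_derivative sqrt M * cos y - 1) (at y)" for y
    unfolding g_def by (auto intro!: derivative_eq_intros)
  have decr: "sqrt M * cos z - 1 < sqrt M * cos y - 1"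
    if "\<eta>1 - K \<le> y" "y < z" "z \<le> \<eta>2 - K" for y z
  proof -
    have "0 \<le> y" "z \<le> pi"
      using that assms(1,3,4) by (auto simp: mem_Ik_iff K_def)
    then have "cos z < cos y" using cos_monotone_0_pi \<open>y < z\<close> by blast
    then show ?thesis using \<open>0 < M\<close> by simp
  qed
  have g_ends: "0 \<le> g (\<eta>1 - K)" "0 \<le> g (\<eta>2 - K)"
    using level(1)[OF assms(3)] level(1)[OF assms(4)] by (simp_all add: M_def)
  have "0 < g (\<eta> - K)"
    by (rule pos_between_if_derivative_strictly_decreasing[OF _ _ g_ends deriv decr])
      (use assms(5,6) in simp_all)
  moreover have "\<eta> \<in> Ik \<theta>1 k" using assms(3-6) by (simp add: Ik_def)
  ultimately show ?thesis using level(2) M_def by blast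
qed

lemma Phi_eq_sqrt_form:
  fixes \<theta>1 \<eta> :: real and k :: nat
  assumes "0 < \<theta>1" "\<eta> \<in> Ik \<theta>1 k"
  shows "Phi \<theta>1 k \<eta> = real k * pi + arccos (cos (\<eta> - real k * pi) / cos \<theta>1)
           - sqrt (\<eta>^2 - (sin \<theta>1)^2 * (\<eta>^2 / (sin \<eta>)^2))"
proof -
  have "\<eta> * gam \<theta>1 \<eta> = sqrt (\<eta>^2 * (1 - (sin \<theta>1)^2 / (sin \<eta>)^2))"
    using pos_of_mem_Ik[OF assms] by (simp add: gam_def real_sqrt_mult)
  also have "\<eta>^2 * (1 - (sin \<theta>1)^2 / (sin \<eta>)^2) = \<eta>^2 - (sin \<theta>1)^2 * (\<eta>^2 / (sin \<eta>)^2)"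
    by (simp add: algebra_simps)
  finally show ?thesis by (simp add: Phi_def)
qed

lemma arccos_minus_sqrt_strictly_decreasing_on_Ik:
  fixes \<theta>1 \<eta>1 \<eta>2 T :: real and k :: nat
  defines "N \<equiv> \<lambda>y. arccos (cos (y - real k * pi) / cos \<theta>1) - sqrt (y^2 - (sin \<theta>1)^2 * T)"
  assumes "0 < \<theta>1" "\<theta>1 < pi / 2" "\<eta>1 \<in> Ik \<theta>1 k" "\<eta>2 \<in> Ik \<theta>1 k" "\<eta>1 < \<eta>2"
    and T_le: "(sin \<theta>1)^2 * T \<le> \<eta>1^2"
    and below: "\<And>y. \<eta>1 < y \<Longrightarrow> y < \<eta>2 \<Longrightarrow> y^2 / (sin y)^2 < T"
  shows "N \<eta>2 < N \<eta>1"
proof (rule DERIV_neg_imp_decreasing_open[OF assms(6)])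
  define K where "K = real k * pi"
  have bounds: "\<theta>1 \<le> y - K" "y - K \<le> pi - \<theta>1" if "\<eta>1 \<le> y" "y \<le> \<eta>2" for y
    using that assms(4,5) by (auto simp: mem_Ik_iff K_def)
  have "0 < cos \<theta>1" using cos_gt_zero[of \<theta>1] assms by auto
  then have "-1 \<le> cos (y - K) / cos \<theta>1 \<and> cos (y - K) / cos \<theta>1 \<le> 1"
    if "y \<in> {\<eta>1..\<eta>2}" for y
    using sin_cos_bounds_away_from_0_pi(2,3)[OF assms(2,3) bounds] that
    by (auto simp: divide_le_eq le_divide_eq)
  then show "continuous_on {\<eta>1..\<eta>2} N"
    unfolding N_def K_def using \<open>0 < cos \<theta>1\<close>
    by (intro continuous_intros continuous_on_arccos) auto
next
  fix y assume y: "\<eta>1 < y" "y < \<eta>2"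
  define K where "K = real k * pi"
  define s where "s = sin \<theta>1"
  have x: "\<theta>1 < y - K" "y - K < pi - \<theta>1" using y assms(4,5) by (auto simp: mem_Ik_iff K_def)
  have "0 < s" using sin_gt_zero[of \<theta>1] assms by (simp add: s_def)
  have "0 < sin (y - K)" using sin_gt_zero[of "y - K"] x assms by auto
  have "0 < \<eta>1" using pos_of_mem_Ik[OF assms(2,4)] .
  then have "\<eta>1^2 < y^2" using y by (simp add: power_strict_mono)
  then have "s^2 * T < y^2" using T_le by (simp add: s_def)
  have sin_sq: "(sin (y - K))^2 = (sin y)^2" by (simp add: K_def sin_squared_diff_nat_mult_pi)
  have "0 < (sin y)^2" using \<open>0 < sin (y - K)\<close> by (simp flip: sin_sq)
  then have "y^2 < T * (sin (y - K))^2"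
    using below[OF y] by (simp add: sin_sq divide_less_eq)
  have deriv: "(N has_real_derivative
      sin (y - K) / sqrt ((sin (y - K))^2 - s^2) - y / sqrt (y^2 - s^2 * T)) (at y)"
  proof -
    have "((\<lambda>y. sqrt (y^2 - s^2 * T)) has_real_derivative y / sqrt (y^2 - s^2 * T)) (at y)"
      using \<open>s^2 * T < y^2\<close> by (auto intro!: derivative_eq_intros simp: field_simps)
    from DERIV_diff[OF arccos_cos_shift_div_has_derivative[OF assms(2,3) x] this]
    show ?thesis by (simp add: N_def K_def s_def)
  qed
  moreover have "sin (y - K) / sqrt ((sin (y - K))^2 - s^2) < y / sqrt (y^2 - s^2 * T)"
    using \<open>0 < \<eta>1\<close> y \<open>0 < s\<close> \<open>0 < sin (y - K)\<close> \<open>s^2 * T < y^2\<close> \<open>y^2 < T * (sin (y - K))^2\<close>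
    by (intro div_sqrt_lt_div_sqrt) auto
  ultimately show "\<exists>d. (N has_real_derivative d) (at y) \<and> d < 0" by auto
qed

lemma Phi_less_if_sq_div_sin_sq_below_left_end:
  fixes \<theta>1 \<eta>1 \<eta>2 :: real and k :: nat
  assumes "0 < \<theta>1" "\<theta>1 < pi / 2" "\<eta>1 \<in> Ik \<theta>1 k" "\<eta>2 \<in> Ik \<theta>1 k" "\<eta>1 < \<eta>2"
    and below: "\<And>\<eta>. \<eta>1 < \<eta> \<Longrightarrow> \<eta> < \<eta>2 \<Longrightarrow> \<eta>^2 / (sin \<eta>)^2 < \<eta>1^2 / (sin \<eta>1)^2"
    and right_end: "\<eta>2^2 / (sin \<eta>2)^2 \<le> \<eta>1^2 / (sin \<eta>1)^2"
  shows "Phi \<theta>1 k \<eta>2 < Phi \<theta>1 k \<eta>1"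
proof -
  define T where "T = \<eta>1^2 / (sin \<eta>1)^2"
  define N where "N = (\<lambda>y. arccos (cos (y - real k * pi) / cos \<theta>1) - sqrt (y^2 - (sin \<theta>1)^2 * T))"
  have "(sin \<theta>1)^2 \<le> (sin (\<eta>1 - real k * pi))^2"
    using sin_le_sin_diff_of_mem_Ik[OF assms(1-3)] sin_gt_zero[of \<theta>1] assms(1,2)
    by (simp add: power_mono)
  then have "(sin \<theta>1)^2 \<le> (sin \<eta>1)^2" by (simp only: sin_squared_diff_nat_mult_pi)
  then have "\<eta>1^2 * ((sin \<theta>1)^2 / (sin \<eta>1)^2) \<le> \<eta>1^2 * 1"
    by (intro mult_left_mono) (auto simp: divide_le_eq_1)
  then have "(sin \<theta>1)^2 * T \<le> \<eta>1^2"
    by (simp add: T_def mult.commute)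
  then have "N \<eta>2 < N \<eta>1"
    unfolding N_def T_def using arccos_minus_sqrt_strictly_decreasing_on_Ik[OF assms(1-5)] below
    by blast
  moreover have "Phi \<theta>1 k \<eta>1 = real k * pi + N \<eta>1"
    using Phi_eq_sqrt_form[OF assms(1,3)] by (simp add: N_def T_def)
  moreover have "Phi \<theta>1 k \<eta>2 \<le> real k * pi + N \<eta>2"
  proof -
    have "(sin \<theta>1)^2 * (\<eta>2^2 / (sin \<eta>2)^2) \<le> (sin \<theta>1)^2 * T"
      using right_end unfolding T_def by (rule mult_left_mono) simp
    then have "sqrt (\<eta>2^2 - (sin \<theta>1)^2 * T) \<le> sqrt (\<eta>2^2 - (sin \<theta>1)^2 * (\<eta>2^2 / (sin \<eta>2)^2))"
      by (intro real_sqrt_le_mono) linarith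
    then show ?thesis using Phi_eq_sqrt_form[OF assms(1,4)] by (simp add: N_def)
  qed
  ultimately show ?thesis by simp
qed

theorem lemma5p52:
  fixes \<theta>1 \<phi>1 \<eta>m \<eta>p :: real and k :: nat
  assumes "0 < \<theta>1" "\<theta>1 < pi / 2"
    and "0 < \<phi>1" "\<phi>1 \<le> pi"
    and "k \<ge> 1"
    and "\<eta>m \<in> Ik \<theta>1 k" "\<eta>p \<in> Ik \<theta>1 k" "\<eta>m < \<eta>p"
    and "Phi \<theta>1 k \<eta>m = \<phi>1" "Phi \<theta>1 k \<eta>p = \<phi>1"
  shows "(sin \<theta>1)^2 * (\<eta>m^2 / (sin \<eta>m)^2) < (sin \<theta>1)^2 * (\<eta>p^2 / (sin \<eta>p)^2)"
proof (rule ccontr)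
  assume "\<not> ?thesis"
  then have "(sin \<theta>1)^2 * (\<eta>p^2 / (sin \<eta>p)^2) \<le> (sin \<theta>1)^2 * (\<eta>m^2 / (sin \<eta>m)^2)"
    by linarith
  moreover have "0 < (sin \<theta>1)^2" using sin_gt_zero[of \<theta>1] assms(1,2) by simp
  ultimately have right_end: "\<eta>p^2 / (sin \<eta>p)^2 \<le> \<eta>m^2 / (sin \<eta>m)^2"
    by (rule mult_left_le_imp_le)
  have "\<eta>^2 / (sin \<eta>)^2 < \<eta>m^2 / (sin \<eta>m)^2" if "\<eta>m < \<eta>" "\<eta> < \<eta>p" for \<eta>
    using sq_div_sin_sq_lt_max_on_Ik[OF assms(1,2,6,7) that] right_end by simp
  then have "Phi \<theta>1 k \<eta>p < Phi \<theta>1 k \<eta>m"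
    using Phi_less_if_sq_div_sin_sq_below_left_end[OF assms(1,2,6,7,8)] right_end by blast
  then show False using assms(9,10) by simp
qed

end
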